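(* Let $H$ be a complex Hilbert space, $\varphi,\psi:[0,1]\to\mathbb{R}$ continuous, and $A\in\mathbb{B}(H)$. Then $$\Big(\int_0^1\min\{|\varphi(t)+\psi(t)|,|\varphi(t)-\psi(t)|\}\,dt\Big)\omega(A)\le\int_0^1\omega_t(\varphi,\psi;A)\,dt\le\Big(\int_0^1\max\{|\varphi(t)+\psi(t)|,|\varphi(t)-\psi(t)|\}\,dt\Big)\omega(A).$$
   Context: $S_1(H)$ is the unit sphere of $H$, $\omega(T)=\sup_{x\in S_1(H)}|\langle Tx,x\rangle|$, and $\omega_t(\varphi,\psi;A)=\sup_{x\in S_1(H)}|\langle(\varphi(t)A+\psi(t)A^* )x,x\rangle|$. *)

theory Defs
  imports "HOL-Analysis.Analysis"
begin

text \<open>The inner product is linear in the first argument and conjugate-linear in the second;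
  the norm is induced by the inner product.\<close>

class complex_inner = real_normed_vector +
  fixes scaleC :: "complex \<Rightarrow> 'a \<Rightarrow> 'a"
    and cinner :: "'a \<Rightarrow> 'a \<Rightarrow> complex"
  assumes scaleC_add_right: "scaleC c (x + y) = scaleC c x + scaleC c y"
    and scaleC_add_left: "scaleC (c + d) x = scaleC c x + scaleC d x"
    and scaleC_scaleC: "scaleC c (scaleC d x) = scaleC (c * d) x"
    and scaleC_one: "scaleC 1 x = x"
    and scaleR_scaleC: "scaleR r x = scaleC (complex_of_real r) x"
    and cinner_conj_sym: "cinner x y = cnj (cinner y x)"
    and cinner_add_left: "cinner (x + y) z = cinner x z + cinner y z"
    and cinner_scaleC_left: "cinner (scaleC c x) y = c * cinner x y"
    and cinner_self_real: "Im (cinner x x) = 0"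
    and cinner_self_nonneg: "0 \<le> Re (cinner x x)"
    and cinner_self_eq_zero: "cinner x x = 0 \<longleftrightarrow> x = 0"
    and norm_eq_sqrt_cinner: "norm x = sqrt (Re (cinner x x))"

class chilbert_space = complex_inner + complete_space

definition bounded_clinear :: "('a::complex_inner \<Rightarrow> 'a) \<Rightarrow> bool" where
  "bounded_clinear T \<longleftrightarrow>
     (\<forall>x y. T (x + y) = T x + T y) \<and>
     (\<forall>c x. T (scaleC c x) = scaleC c (T x)) \<and>
     (\<exists>K. \<forall>x. norm (T x) \<le> norm x * K)"

definition adjoint :: "('a::complex_inner \<Rightarrow> 'a) \<Rightarrow> 'a \<Rightarrow> 'a" where
  "adjoint T = (SOME S. \<forall>x y. cinner (T x) y = cinner x (S y))"

text \<open>Numerical radius \<open>\<omega>(T) = sup_{x \<in> S_1(H)} |\<langle>T x, x\<rangle>|\<close>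
  (the \<open>0\<close> only fixes the value for the trivial space \<open>H = {0}\<close>; the values are nonnegative).\<close>
definition num_radius :: "('a::complex_inner \<Rightarrow> 'a) \<Rightarrow> real" where
  "num_radius T = Sup (insert 0 ((\<lambda>x. cmod (cinner (T x) x)) ` {x. norm x = 1}))"

definition omega_t :: "(real \<Rightarrow> real) \<Rightarrow> (real \<Rightarrow> real) \<Rightarrow> ('a::complex_inner \<Rightarrow> 'a) \<Rightarrow> real \<Rightarrow> real" where
  "omega_t \<phi> \<psi> A t = num_radius
     (\<lambda>x. scaleC (complex_of_real (\<phi> t)) (A x) + scaleC (complex_of_real (\<psi> t)) (adjoint A x))"

end

theory Submission
  imports Defs
begin

text \<open>For a unit vector \<open>x\<close> put \<open>z = \<langle>A x, x\<rangle>\<close>. Then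
  \<open>\<langle>(a A + b A\<^sup>*) x, x\<rangle> = a z + b z\<^sup>* = (a + b) Re z + i (a - b) Im z\<close>, whose modulus lies between
  \<open>min |a \<plusminus> b| |z|\<close> and \<open>max |a \<plusminus> b| |z|\<close>. Taking suprema over unit vectors bounds
  \<open>\<omega>(a A + b A\<^sup>*)\<close> between \<open>min |a \<plusminus> b| \<omega>(A)\<close> and \<open>max |a \<plusminus> b| \<omega>(A)\<close>; with \<open>a = \<phi> t\<close>,
  \<open>b = \<psi> t\<close> the claim follows by integrating, the integrand being continuous because
  \<open>\<omega>(a A + b A\<^sup>*)\<close> is Lipschitz in \<open>(a, b)\<close>.

  The adjoint is only specified by its defining property, so its existence is needed: it comes
  from the Riesz representation theorem, proved via nearest points in closed convex sets.\<close>

lemma cinner_add_right: "cinner x (y + z) = cinner x y + cinner (x::'a::complex_inner) z"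
  by (metis cinner_add_left cinner_conj_sym complex_cnj_add)

lemma cinner_scaleC_right: "cinner x (scaleC c y) = cnj c * cinner (x::'a::complex_inner) y"
  by (metis cinner_conj_sym cinner_scaleC_left complex_cnj_mult)

lemma scaleC_minus1_left: "scaleC (-1) (x::'a::complex_inner) = - x"
  by (metis of_real_1 of_real_minus scaleR_minus1_left scaleR_scaleC)

lemma cinner_minus_left: "cinner (- x) y = - cinner (x::'a::complex_inner) y"
  using cinner_scaleC_left[of "-1" x y] by (simp add: scaleC_minus1_left)

lemma cinner_minus_right: "cinner x (- y) = - cinner x (y::'a::complex_inner)"
  by (metis cinner_conj_sym cinner_minus_left complex_cnj_minus)

lemma cinner_diff_left: "cinner (x - y) z = cinner x z - cinner (y::'a::complex_inner) z"
  using cinner_add_left[of x "-y" z] by (simp add: cinner_minus_left)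

lemma cinner_diff_right: "cinner x (y - z) = cinner x y - cinner x (z::'a::complex_inner)"
  using cinner_add_right[of x y "-z"] by (simp add: cinner_minus_right)

lemma cinner_zero_left [simp]: "cinner 0 (x::'a::complex_inner) = 0"
  using cinner_diff_left[of 0 0 x] by simp

lemma cinner_zero_right [simp]: "cinner (x::'a::complex_inner) 0 = 0"
  using cinner_diff_right[of x 0 0] by simp

lemma cinner_self_eq_norm_power2: "cinner x x = complex_of_real ((norm (x::'a::complex_inner))\<^sup>2)"
  using norm_eq_sqrt_cinner[of x] cinner_self_nonneg[of x] cinner_self_real[of x]
  by (simp add: complex_eq_iff)

lemma parallelogram_law:
  fixes x y :: "'a::complex_inner"
  shows "(norm (x + y))\<^sup>2 + (norm (x - y))\<^sup>2 = 2 * (norm x)\<^sup>2 + 2 * (norm y)\<^sup>2"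
proof -
  have "cinner (x + y) (x + y) + cinner (x - y) (x - y) = 2 * cinner x x + 2 * cinner y y"
    by (simp add: cinner_add_left cinner_add_right cinner_diff_left cinner_diff_right algebra_simps)
  then have "complex_of_real ((norm (x + y))\<^sup>2 + (norm (x - y))\<^sup>2)
      = complex_of_real (2 * (norm x)\<^sup>2 + 2 * (norm y)\<^sup>2)"
    by (simp add: cinner_self_eq_norm_power2 del: of_real_power)
  then show ?thesis
    by (simp only: of_real_eq_iff)
qed

lemma norm_diff_midpoint_power2:
  fixes x u v :: "'a::complex_inner"
  shows "(norm (u - v))\<^sup>2
    = 2 * (norm (x - u))\<^sup>2 + 2 * (norm (x - v))\<^sup>2 - 4 * (norm (x - ((1/2) *\<^sub>R u + (1/2) *\<^sub>R v)))\<^sup>2"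
proof -
  have "(x - u) + (x - v) = 2 *\<^sub>R (x - ((1/2) *\<^sub>R u + (1/2) *\<^sub>R v))"
    by (simp add: algebra_simps scaleR_2)
  then show ?thesis
    using parallelogram_law[of "x - u" "x - v"] by (simp add: power_mult_distrib norm_minus_commute)
qed

lemma norm_diff_projection_power2:
  fixes x y :: "'a::complex_inner"
  assumes "y \<noteq> 0"
  shows "(norm (x - scaleC (cinner x y / complex_of_real ((norm y)\<^sup>2)) y))\<^sup>2
         = (norm x)\<^sup>2 - (cmod (cinner x y))\<^sup>2 / (norm y)\<^sup>2"
proof -
  define c where "c = cinner x y / complex_of_real ((norm y)\<^sup>2)"
  have yx: "cinner y x = cnj (cinner x y)"
    by (rule cinner_conj_sym)
  have "cinner (x - scaleC c y) (x - scaleC c y)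
      = cinner x x - cnj c * cinner x y - c * cnj (cinner x y) + c * cnj c * cinner y y"
    by (simp add: cinner_diff_left cinner_diff_right cinner_scaleC_left cinner_scaleC_right
        yx algebra_simps)
  also have "\<dots> = complex_of_real ((norm x)\<^sup>2 - (cmod (cinner x y))\<^sup>2 / (norm y)\<^sup>2)"
    using assms
    by (simp add: c_def cinner_self_eq_norm_power2 complex_norm_square field_simps
        del: complex_mult_cnj of_real_power)
  finally show ?thesis
    unfolding c_def cinner_self_eq_norm_power2 of_real_eq_iff .
qed

lemma cauchy_schwarz: "cmod (cinner x y) \<le> norm x * norm (y::'a::complex_inner)"
proof (cases "y = 0")
  case False
  then have "0 \<le> (norm x)\<^sup>2 - (cmod (cinner x y))\<^sup>2 / (norm y)\<^sup>2"
    by (metis norm_diff_projection_power2 zero_le_power2)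
  then have "(cmod (cinner x y))\<^sup>2 \<le> (norm x * norm y)\<^sup>2"
    using False by (simp add: field_simps power_mult_distrib)
  then show ?thesis
    by (meson norm_ge_zero power2_le_imp_le zero_le_mult_iff)
qed simp

lemma cinner_eq_zero_if_norm_minimal:
  fixes z y :: "'a::complex_inner"
  assumes "\<And>c. norm z \<le> norm (z - scaleC c y)"
  shows "cinner z y = 0"
proof (cases "y = 0")
  case False
  define c where "c = cinner z y / complex_of_real ((norm y)\<^sup>2)"
  have "(norm z)\<^sup>2 \<le> (norm (z - scaleC c y))\<^sup>2"
    using assms[of c] by (simp add: power_mono)
  also have "\<dots> = (norm z)\<^sup>2 - (cmod (cinner z y))\<^sup>2 / (norm y)\<^sup>2"
    unfolding c_def by (rule norm_diff_projection_power2[OF False])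
  finally have "(cmod (cinner z y))\<^sup>2 \<le> 0"
    using False by (simp add: divide_le_0_iff)
  then show ?thesis
    by simp
qed simp

lemma infdist_minimizing_sequence:
  fixes x :: "'a::metric_space"
  assumes "N \<noteq> {}"
  obtains s where "\<And>k. s k \<in> N" and "(\<lambda>k. dist x (s k)) \<longlonglongrightarrow> infdist x N"
proof -
  have "\<exists>y\<in>N. dist x y < infdist x N + inverse (real (Suc k))" for k
  proof -
    have "(INF y\<in>N. dist x y) < infdist x N + inverse (real (Suc k))"
      using assms by (simp add: infdist_notempty)
    then show ?thesis
      using cINF_less_iff[OF assms bdd_below_image_dist] by blast
  qed
  then obtain s where sN: "\<And>k. s k \<in> N"
    and s_close: "\<And>k. dist x (s k) < infdist x N + inverse (real (Suc k))"
    by metis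
  have lower: "\<forall>\<^sub>F k in sequentially. infdist x N \<le> dist x (s k)"
    using sN by (simp add: infdist_le)
  have upper: "\<forall>\<^sub>F k in sequentially. dist x (s k) \<le> infdist x N + inverse (real (Suc k))"
    using s_close by (simp add: less_imp_le)
  have "(\<lambda>k. infdist x N + inverse (real (Suc k))) \<longlonglongrightarrow> infdist x N"
    using tendsto_add[OF tendsto_const LIMSEQ_inverse_real_of_nat] by simp
  then have "(\<lambda>k. dist x (s k)) \<longlonglongrightarrow> infdist x N"
    by (rule tendsto_sandwich[OF lower upper tendsto_const])
  with sN show ?thesis
    by (rule that)
qed

lemma Cauchy_if_norm_diff_power2_le:
  fixes s :: "nat \<Rightarrow> 'a::real_normed_vector"
  assumes bound: "\<And>m n. (norm (s m - s n))\<^sup>2 \<le> e m + e n" and "e \<longlonglongrightarrow> 0"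
  shows "Cauchy s"
proof (rule CauchyI)
  fix \<epsilon> :: real
  assume "0 < \<epsilon>"
  then have "\<forall>\<^sub>F k in sequentially. e k < \<epsilon>\<^sup>2 / 2"
    using order_tendstoD(2)[OF \<open>e \<longlonglongrightarrow> 0\<close>, of "\<epsilon>\<^sup>2 / 2"] by simp
  then obtain M where M: "\<And>k. k \<ge> M \<Longrightarrow> e k < \<epsilon>\<^sup>2 / 2"
    unfolding eventually_sequentially by blast
  have "norm (s m - s n) < \<epsilon>" if "m \<ge> M" "n \<ge> M" for m n
  proof -
    have "(norm (s m - s n))\<^sup>2 < \<epsilon>\<^sup>2"
      using bound[of m n] M[OF that(1)] M[OF that(2)] by simp
    then show ?thesis
      by (rule power2_less_imp_less) (use \<open>0 < \<epsilon>\<close> in simp)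
  qed
  then show "\<exists>M. \<forall>m\<ge>M. \<forall>n\<ge>M. norm (s m - s n) < \<epsilon>"
    by blast
qed

text \<open>The parallelogram law turns a minimizing sequence into a Cauchy sequence, because
  midpoints of its points stay in the convex set.\<close>

lemma nearest_point_exists:
  fixes x :: "'a::chilbert_space"
  assumes "closed N" "convex N" "N \<noteq> {}"
  obtains n where "n \<in> N" "dist x n = infdist x N"
proof -
  define d where "d = infdist x N"
  obtain s where sN: "\<And>k. s k \<in> N" and lim: "(\<lambda>k. dist x (s k)) \<longlonglongrightarrow> d"
    using infdist_minimizing_sequence[OF \<open>N \<noteq> {}\<close>] unfolding d_def by metis
  have "Cauchy s"
  proof (rule Cauchy_if_norm_diff_power2_le)
    show "(norm (s m - s n))\<^sup>2 \<le> 2 * ((dist x (s m))\<^sup>2 - d\<^sup>2) + 2 * ((dist x (s n))\<^sup>2 - d\<^sup>2)" for m n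
    proof -
      have "(1/2) *\<^sub>R s m + (1/2) *\<^sub>R s n \<in> N"
        using sN by (intro convexD[OF \<open>convex N\<close>]) auto
      then have "d \<le> norm (x - ((1/2) *\<^sub>R s m + (1/2) *\<^sub>R s n))"
        unfolding d_def dist_norm[symmetric] by (rule infdist_le)
      then have "d\<^sup>2 \<le> (norm (x - ((1/2) *\<^sub>R s m + (1/2) *\<^sub>R s n)))\<^sup>2"
        by (simp add: d_def infdist_nonneg power_mono)
      then show ?thesis
        using norm_diff_midpoint_power2[of "s m" "s n" x] by (simp add: dist_norm)
    qed
    have "(\<lambda>k. 2 * ((dist x (s k))\<^sup>2 - d\<^sup>2)) \<longlonglongrightarrow> 2 * (d\<^sup>2 - d\<^sup>2)"
      by (intro tendsto_intros lim)
    then show "(\<lambda>k. 2 * ((dist x (s k))\<^sup>2 - d\<^sup>2)) \<longlonglongrightarrow> 0"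
      by simp
  qed
  then obtain n where "s \<longlonglongrightarrow> n"
    using Cauchy_convergent_iff convergent_def by blast
  then have "n \<in> N"
    using \<open>closed N\<close> sN closed_sequential_limits by blast
  moreover have "dist x n = infdist x N"
    using LIMSEQ_unique[OF tendsto_dist[OF tendsto_const \<open>s \<longlonglongrightarrow> n\<close>] lim] unfolding d_def .
  ultimately show ?thesis
    by (rule that)
qed

theorem riesz_representation:
  fixes f :: "'a::chilbert_space \<Rightarrow> complex"
  assumes add: "\<And>x y. f (x + y) = f x + f y" and scale: "\<And>c x. f (scaleC c x) = c * f x"
    and bound: "\<And>x. cmod (f x) \<le> norm x * K"
  shows "\<exists>w. \<forall>x. f x = cinner x w"
proof (cases "\<forall>x. f x = 0")
  case True
  then show ?thesis
    by (intro exI[of _ 0]) simp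
next
  case False
  then obtain x0 where "f x0 \<noteq> 0"
    by blast
  have lin: "bounded_linear f"
    by (rule bounded_linear_intro[OF add _ bound]) (simp add: scaleR_scaleC scale scaleR_conv_of_real)
  define N where "N = f -` {0}"
  have "closed N"
    unfolding N_def using lin by (intro closed_vimage closed_singleton linear_continuous_on)
  moreover have "convex N"
    unfolding N_def using lin by (intro convex_linear_vimage bounded_linear.linear convex_singleton)
  moreover have "0 \<in> N"
    unfolding N_def using lin by (simp add: linear_simps)
  ultimately obtain n where "n \<in> N" and n_nearest: "dist x0 n = infdist x0 N"
    using nearest_point_exists by blast
  define z where "z = x0 - n"
  have "f z \<noteq> 0"
    using \<open>n \<in> N\<close> \<open>f x0 \<noteq> 0\<close> lin by (simp add: z_def N_def linear_simps)
  have orth: "cinner z m = 0" if "m \<in> N" for m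
  proof (rule cinner_eq_zero_if_norm_minimal)
    fix c
    have "n + scaleC c m \<in> N"
      using \<open>n \<in> N\<close> that by (simp add: N_def add scale)
    then have "dist x0 n \<le> dist x0 (n + scaleC c m)"
      unfolding n_nearest by (rule infdist_le)
    then show "norm z \<le> norm (z - scaleC c m)"
      by (simp add: z_def dist_norm algebra_simps)
  qed
  have "f x = cinner x (scaleC (cnj (f z / complex_of_real ((norm z)\<^sup>2))) z)" for x
  proof -
    \<comment> \<open>\<open>x\<close> differs from a multiple of \<open>z\<close> by an element of the kernel, which is orthogonal to \<open>z\<close>\<close>
    have "f (x - scaleC (f x / f z) z) = 0"
      using \<open>f z \<noteq> 0\<close> lin by (simp add: linear_simps scale)
    then have "cinner (x - scaleC (f x / f z) z) z = 0"
      using orth[of "x - scaleC (f x / f z) z"] by (metis N_def cinner_conj_sym complex_cnj_zero vimage_singleton_eq)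
    then have "cinner x z = f x / f z * complex_of_real ((norm z)\<^sup>2)"
      by (simp add: cinner_diff_left cinner_scaleC_left cinner_self_eq_norm_power2 del: of_real_power)
    moreover have "z \<noteq> 0"
      using \<open>f z \<noteq> 0\<close> lin by (auto simp: linear_simps)
    ultimately show ?thesis
      using \<open>f z \<noteq> 0\<close> by (simp add: cinner_scaleC_right field_simps del: of_real_power)
  qed
  then show ?thesis
    by blast
qed

lemma cinner_adjoint:
  fixes A :: "'a::chilbert_space \<Rightarrow> 'a"
  assumes "bounded_clinear A"
  shows "cinner (A x) y = cinner x (adjoint A y)"
proof -
  obtain K where add: "\<And>x y. A (x + y) = A x + A y"
    and scale: "\<And>c x. A (scaleC c x) = scaleC c (A x)" and bound: "\<And>x. norm (A x) \<le> norm x * K"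
    using assms unfolding bounded_clinear_def by blast
  have "\<exists>w. \<forall>x. cinner (A x) y = cinner x w" for y
  proof (rule riesz_representation)
    show "cmod (cinner (A x) y) \<le> norm x * (K * norm y)" for x
      using cauchy_schwarz[of "A x" y] mult_right_mono[OF bound[of x], of "norm y"]
      by (simp add: mult.assoc)
  qed (simp_all add: add scale cinner_add_left cinner_scaleC_left)
  then have "\<exists>S. \<forall>x y. cinner (A x) y = cinner x (S y)"
    by metis
  from someI_ex[OF this] show ?thesis
    unfolding adjoint_def by blast
qed

lemma cmod_real_mult_add_cnj_bounds:
  fixes a b :: real and z :: complex
  shows "min \<bar>a + b\<bar> \<bar>a - b\<bar> * cmod z \<le> cmod (of_real a * z + of_real b * cnj z)"
    and "cmod (of_real a * z + of_real b * cnj z) \<le> max \<bar>a + b\<bar> \<bar>a - b\<bar> * cmod z"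
proof -
  define m where "m = min \<bar>a + b\<bar> \<bar>a - b\<bar>"
  define M where "M = max \<bar>a + b\<bar> \<bar>a - b\<bar>"
  have m_le: "m\<^sup>2 \<le> (a + b)\<^sup>2" "m\<^sup>2 \<le> (a - b)\<^sup>2" and M_ge: "(a + b)\<^sup>2 \<le> M\<^sup>2" "(a - b)\<^sup>2 \<le> M\<^sup>2"
    unfolding m_def M_def by (auto simp flip: abs_le_square_iff)
  have "Re (of_real a * z + of_real b * cnj z) = (a + b) * Re z"
    and "Im (of_real a * z + of_real b * cnj z) = (a - b) * Im z"
    by (simp_all add: algebra_simps)
  then have "(cmod (of_real a * z + of_real b * cnj z))\<^sup>2 = (a + b)\<^sup>2 * (Re z)\<^sup>2 + (a - b)\<^sup>2 * (Im z)\<^sup>2"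
    by (simp add: cmod_power2 power_mult_distrib)
  moreover have "(cmod z)\<^sup>2 = (Re z)\<^sup>2 + (Im z)\<^sup>2"
    by (simp add: cmod_power2)
  ultimately have lower: "(m * cmod z)\<^sup>2 \<le> (cmod (of_real a * z + of_real b * cnj z))\<^sup>2"
    and upper: "(cmod (of_real a * z + of_real b * cnj z))\<^sup>2 \<le> (M * cmod z)\<^sup>2"
    using mult_right_mono[OF m_le(1), of "(Re z)\<^sup>2"] mult_right_mono[OF m_le(2), of "(Im z)\<^sup>2"]
      mult_right_mono[OF M_ge(1), of "(Re z)\<^sup>2"] mult_right_mono[OF M_ge(2), of "(Im z)\<^sup>2"]
    by (simp_all add: power_mult_distrib distrib_left)
  show "min \<bar>a + b\<bar> \<bar>a - b\<bar> * cmod z \<le> cmod (of_real a * z + of_real b * cnj z)"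
    using power2_le_imp_le[OF lower norm_ge_zero] by (simp add: m_def)
  show "cmod (of_real a * z + of_real b * cnj z) \<le> max \<bar>a + b\<bar> \<bar>a - b\<bar> * cmod z"
    using power2_le_imp_le[OF upper] by (simp add: M_def)
qed

lemma cmod_real_mult_add_cnj_le:
  fixes a b a' b' :: real and z :: complex
  shows "cmod (of_real a * z + of_real b * cnj z)
     \<le> cmod (of_real a' * z + of_real b' * cnj z) + (\<bar>a - a'\<bar> + \<bar>b - b'\<bar>) * cmod z"
proof -
  have "of_real a * z + of_real b * cnj z
     = (of_real a' * z + of_real b' * cnj z) + (of_real (a - a') * z + of_real (b - b') * cnj z)"
    by (simp add: algebra_simps)
  also have "cmod \<dots> \<le> cmod (of_real a' * z + of_real b' * cnj z)
      + (cmod (of_real (a - a') * z) + cmod (of_real (b - b') * cnj z))"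
    by (meson add_left_mono norm_triangle_ineq order_trans)
  also have "\<dots> = cmod (of_real a' * z + of_real b' * cnj z) + (\<bar>a - a'\<bar> + \<bar>b - b'\<bar>) * cmod z"
    by (simp only: norm_mult norm_of_real complex_mod_cnj distrib_right)
  finally show ?thesis .
qed

lemma num_radius_le:
  fixes T :: "'a::complex_inner \<Rightarrow> 'a"
  assumes "0 \<le> c" and "\<And>x. norm x = 1 \<Longrightarrow> cmod (cinner (T x) x) \<le> c"
  shows "num_radius T \<le> c"
  unfolding num_radius_def by (rule cSup_least) (use assms in auto)

lemma cmod_cinner_le_num_radius:
  fixes T :: "'a::complex_inner \<Rightarrow> 'a"
  assumes "bdd_above ((\<lambda>x. cmod (cinner (T x) x)) ` {x. norm x = 1})" and "norm x = 1"
  shows "cmod (cinner (T x) x) \<le> num_radius T"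
  unfolding num_radius_def by (rule cSup_upper) (use assms in auto)

lemma num_radius_nonneg:
  fixes T :: "'a::complex_inner \<Rightarrow> 'a"
  assumes "bdd_above ((\<lambda>x. cmod (cinner (T x) x)) ` {x. norm x = 1})"
  shows "0 \<le> num_radius T"
  unfolding num_radius_def by (rule cSup_upper) (use assms in auto)

lemma bounded_clinear_bdd_above_cinner:
  fixes T :: "'a::complex_inner \<Rightarrow> 'a"
  assumes "bounded_clinear T"
  shows "bdd_above ((\<lambda>x. cmod (cinner (T x) x)) ` {x. norm x = 1})"
proof -
  obtain K where K: "\<And>x. norm (T x) \<le> norm x * K"
    using assms unfolding bounded_clinear_def by blast
  have "cmod (cinner (T x) x) \<le> K" if "norm x = 1" for x
    using cauchy_schwarz[of "T x" x] K[of x] that by simp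
  then show ?thesis
    by (intro bdd_aboveI2) auto
qed

definition adj_comb :: "real \<Rightarrow> real \<Rightarrow> ('a::complex_inner \<Rightarrow> 'a) \<Rightarrow> 'a \<Rightarrow> 'a" where
  "adj_comb a b A x = scaleC (complex_of_real a) (A x) + scaleC (complex_of_real b) (adjoint A x)"

lemma omega_t_eq_num_radius_adj_comb: "omega_t \<phi> \<psi> A t = num_radius (adj_comb (\<phi> t) (\<psi> t) A)"
  unfolding omega_t_def adj_comb_def ..

lemma cinner_adj_comb:
  fixes A :: "'a::chilbert_space \<Rightarrow> 'a"
  assumes "bounded_clinear A"
  shows "cinner (adj_comb a b A x) x = of_real a * cinner (A x) x + of_real b * cnj (cinner (A x) x)"
proof -
  have "cinner (adjoint A x) x = cnj (cinner (A x) x)"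
    using cinner_adjoint[OF assms, of x x] cinner_conj_sym[of "adjoint A x" x] by simp
  then show ?thesis
    by (simp add: adj_comb_def cinner_add_left cinner_scaleC_left)
qed

context
  fixes A :: "'a::chilbert_space \<Rightarrow> 'a"
  assumes A: "bounded_clinear A"
begin

lemma cmod_cinner_adj_comb_le:
  assumes "norm x = 1"
  shows "cmod (cinner (adj_comb a b A x) x) \<le> max \<bar>a + b\<bar> \<bar>a - b\<bar> * num_radius A"
proof -
  have "cmod (cinner (adj_comb a b A x) x) \<le> max \<bar>a + b\<bar> \<bar>a - b\<bar> * cmod (cinner (A x) x)"
    unfolding cinner_adj_comb[OF A] by (rule cmod_real_mult_add_cnj_bounds(2))
  also have "\<dots> \<le> max \<bar>a + b\<bar> \<bar>a - b\<bar> * num_radius A"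
    using cmod_cinner_le_num_radius[OF bounded_clinear_bdd_above_cinner[OF A] assms]
    by (simp add: mult_left_mono)
  finally show ?thesis .
qed

lemma bdd_above_cinner_adj_comb:
  "bdd_above ((\<lambda>x. cmod (cinner (adj_comb a b A x) x)) ` {x. norm x = 1})"
  using cmod_cinner_adj_comb_le by (intro bdd_aboveI2) auto

lemma num_radius_adj_comb_le: "num_radius (adj_comb a b A) \<le> max \<bar>a + b\<bar> \<bar>a - b\<bar> * num_radius A"
  using num_radius_nonneg[OF bounded_clinear_bdd_above_cinner[OF A]]
  by (intro num_radius_le cmod_cinner_adj_comb_le) simp_all

lemma num_radius_adj_comb_ge: "min \<bar>a + b\<bar> \<bar>a - b\<bar> * num_radius A \<le> num_radius (adj_comb a b A)"
proof (cases "min \<bar>a + b\<bar> \<bar>a - b\<bar> = 0")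
  case True
  then show ?thesis
    using num_radius_nonneg[OF bdd_above_cinner_adj_comb] by simp
next
  case False
  define m where "m = min \<bar>a + b\<bar> \<bar>a - b\<bar>"
  have "0 < m"
    using False unfolding m_def min_def by auto
  have "m * cmod (cinner (A x) x) \<le> num_radius (adj_comb a b A)" if "norm x = 1" for x
  proof -
    have "m * cmod (cinner (A x) x) \<le> cmod (cinner (adj_comb a b A x) x)"
      unfolding m_def cinner_adj_comb[OF A] by (rule cmod_real_mult_add_cnj_bounds(1))
    also have "\<dots> \<le> num_radius (adj_comb a b A)"
      by (rule cmod_cinner_le_num_radius[OF bdd_above_cinner_adj_comb that])
    finally show ?thesis .
  qed
  then have "num_radius A \<le> num_radius (adj_comb a b A) / m"
    using \<open>0 < m\<close> num_radius_nonneg[OF bdd_above_cinner_adj_comb]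
    by (intro num_radius_le) (simp_all add: field_simps mult.commute)
  then show ?thesis
    using \<open>0 < m\<close> by (simp add: m_def field_simps mult.commute)
qed

lemma num_radius_adj_comb_le_shift:
  "num_radius (adj_comb a b A)
     \<le> num_radius (adj_comb a' b' A) + (\<bar>a - a'\<bar> + \<bar>b - b'\<bar>) * num_radius A"
proof (rule num_radius_le)
  show "0 \<le> num_radius (adj_comb a' b' A) + (\<bar>a - a'\<bar> + \<bar>b - b'\<bar>) * num_radius A"
    using num_radius_nonneg[OF bdd_above_cinner_adj_comb] num_radius_nonneg[OF bounded_clinear_bdd_above_cinner[OF A]]
    by simp
  fix x :: 'a
  assume "norm x = 1"
  have "cmod (cinner (adj_comb a b A x) x)
      \<le> cmod (cinner (adj_comb a' b' A x) x) + (\<bar>a - a'\<bar> + \<bar>b - b'\<bar>) * cmod (cinner (A x) x)"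
    unfolding cinner_adj_comb[OF A] by (rule cmod_real_mult_add_cnj_le)
  also have "\<dots> \<le> num_radius (adj_comb a' b' A) + (\<bar>a - a'\<bar> + \<bar>b - b'\<bar>) * num_radius A"
    using cmod_cinner_le_num_radius[OF bdd_above_cinner_adj_comb \<open>norm x = 1\<close>]
      cmod_cinner_le_num_radius[OF bounded_clinear_bdd_above_cinner[OF A] \<open>norm x = 1\<close>]
    by (intro add_mono mult_left_mono) simp_all
  finally show "cmod (cinner (adj_comb a b A x) x)
      \<le> num_radius (adj_comb a' b' A) + (\<bar>a - a'\<bar> + \<bar>b - b'\<bar>) * num_radius A" .
qed

lemma continuous_on_omega_t:
  assumes "continuous_on S \<phi>" and "continuous_on S \<psi>"
  shows "continuous_on S (omega_t \<phi> \<psi> A)"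
proof -
  define G where "G p = num_radius (adj_comb (fst p) (snd p) A)" for p :: "real \<times> real"
  have "(2 * num_radius A)-lipschitz_on UNIV G"
  proof (rule lipschitz_onI)
    fix p q :: "real \<times> real"
    have "dist (G p) (G q) \<le> (\<bar>fst p - fst q\<bar> + \<bar>snd p - snd q\<bar>) * num_radius A"
      using num_radius_adj_comb_le_shift[of "fst p" "snd p" "fst q" "snd q"]
        num_radius_adj_comb_le_shift[of "fst q" "snd q" "fst p" "snd p"]
      by (simp add: G_def dist_real_def abs_minus_commute)
    also have "\<dots> \<le> 2 * num_radius A * dist p q"
    proof -
      have "\<bar>fst p - fst q\<bar> + \<bar>snd p - snd q\<bar> \<le> 2 * dist p q"
        using dist_fst_le[of p q] dist_snd_le[of p q] by (simp add: dist_real_def)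
      then show ?thesis
        using mult_right_mono num_radius_nonneg[OF bounded_clinear_bdd_above_cinner[OF A]]
        by (fastforce simp: ac_simps)
    qed
    finally show "dist (G p) (G q) \<le> 2 * num_radius A * dist p q" .
  qed (simp add: num_radius_nonneg[OF bounded_clinear_bdd_above_cinner[OF A]])
  then have "continuous_on UNIV G"
    by (rule lipschitz_on_continuous_on)
  then have "continuous_on S (\<lambda>t. G (\<phi> t, \<psi> t))"
    by (rule continuous_on_compose2) (auto intro: continuous_on_Pair assms)
  then show ?thesis
    by (simp add: G_def omega_t_eq_num_radius_adj_comb[abs_def])
qed

end

theorem corollary4p4:
  fixes \<phi> \<psi> :: "real \<Rightarrow> real" and A :: "'a::chilbert_space \<Rightarrow> 'a"
  assumes "continuous_on {0..1} \<phi>" and "continuous_on {0..1} \<psi>"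
    and "bounded_clinear A"
  shows "integral {0..1} (\<lambda>t. min \<bar>\<phi> t + \<psi> t\<bar> \<bar>\<phi> t - \<psi> t\<bar>) * num_radius A
           \<le> integral {0..1} (\<lambda>t. omega_t \<phi> \<psi> A t)
       \<and> integral {0..1} (\<lambda>t. omega_t \<phi> \<psi> A t)
           \<le> integral {0..1} (\<lambda>t. max \<bar>\<phi> t + \<psi> t\<bar> \<bar>\<phi> t - \<psi> t\<bar>) * num_radius A"
proof -
  have lower: "min \<bar>\<phi> t + \<psi> t\<bar> \<bar>\<phi> t - \<psi> t\<bar> * num_radius A \<le> omega_t \<phi> \<psi> A t" for t
    unfolding omega_t_eq_num_radius_adj_comb by (rule num_radius_adj_comb_ge[OF assms(3)])
  have upper: "omega_t \<phi> \<psi> A t \<le> max \<bar>\<phi> t + \<psi> t\<bar> \<bar>\<phi> t - \<psi> t\<bar> * num_radius A" for t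
    unfolding omega_t_eq_num_radius_adj_comb by (rule num_radius_adj_comb_le[OF assms(3)])
  have "omega_t \<phi> \<psi> A integrable_on {0..1}"
    by (intro integrable_continuous_interval continuous_on_omega_t assms)
  moreover have "(\<lambda>t. min \<bar>\<phi> t + \<psi> t\<bar> \<bar>\<phi> t - \<psi> t\<bar> * num_radius A) integrable_on {0..1}"
    and "(\<lambda>t. max \<bar>\<phi> t + \<psi> t\<bar> \<bar>\<phi> t - \<psi> t\<bar> * num_radius A) integrable_on {0..1}"
    by (intro integrable_continuous_interval continuous_intros assms)+
  ultimately show ?thesis
    using lower upper by (auto simp flip: integral_mult_left intro!: integral_le)
qed

end
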